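(* Let $X$ be an extensible marked Dynkin diagram with $d$ nodes and let $n\ge d$ be such that $\det(X_n)\ne0$. Fix $i$ with $1\le i\le n$ and write $\omega_i^{(n)}=\sum_{k=1}^n c_k\alpha_k^{(n)}$. Then $a_i=\det(X_n)\,c_n$.
   Context: A marked Dynkin diagram $X$ has nodes $1,\dots,d$ with node $d$ distinguished and symmetrizable generalized Cartan matrix $C(X)$. For $m\ge d$, $X_m$ is obtained by attaching a simply-laced chain of new nodes $d+1,\dots,m$ to node $d$ (so $C(X_m)$ has $C(X)$ as upper-left block, $2$ on the remaining diagonal, $-1$ in positions $(i,i+1),(i+1,i)$ for $d\le i<m$, $0$ elsewhere); $X_{d-1}$ denotes $X$ with node $d$ and its edges deleted. $\det(Y)$ is the determinant of the generalized Cartan matrix of $Y$. The sequence $\det(X_m)$, $m\ge d$, is arithmetic with common difference $\Delta$; $X$ is extensible if $\Delta\ne0$, $\det(X)\ne0$ and $\gcd(\Delta,\det X)=1$. For $\mathfrak g(X_n)$: simple roots $\alpha_k^{(n)}$ and fundamental weights $\omega_i^{(n)}$. The integers $a_i$ are defined by: for $1\le i\le d$, $a_i=\det(X)\,(C(X)^{-1})_{d\,i}$ (equivalently $\det(X)\check\omega_d=\sum_{i=1}^d a_i\check\alpha_i$, where $\check\alpha_i$ are the simple coroots of $X$ and $\check\omega_d$ is the element of their span with $\alpha_j(\check\omega_d)=\delta_{jd}$); for $i>d$, $a_i=\det(X_{i-1})$. *)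

theory Defs
  imports "Jordan_Normal_Form.Determinant" "Jordan_Normal_Form.Gauss_Jordan_Elimination"
begin

text \<open>A marked Dynkin diagram X with d nodes is given by its d x d
  integer generalized Cartan matrix C, with C(i,j) = alpha_j(coroot_i) (Kac convention).
  Node k (1-based) of the paper is row/column index k-1 (0-based) in the matrix.
  The distinguished node d is index d-1.\<close>

definition gcm :: "int mat \<Rightarrow> nat \<Rightarrow> bool" where
  "gcm C d \<longleftrightarrow> C \<in> carrier_mat d d \<and>
     (\<forall>i<d. C $$ (i,i) = 2) \<and>
     (\<forall>i<d. \<forall>j<d. i \<noteq> j \<longrightarrow> C $$ (i,j) \<le> 0) \<and>
     (\<forall>i<d. \<forall>j<d. C $$ (i,j) = 0 \<longleftrightarrow> C $$ (j,i) = 0)"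

definition symmetrizable :: "int mat \<Rightarrow> nat \<Rightarrow> bool" where
  "symmetrizable C d \<longleftrightarrow> (\<exists>e :: nat \<Rightarrow> rat. (\<forall>i<d. e i > 0) \<and>
      (\<forall>i<d. \<forall>j<d. e i * of_int (C $$ (i,j)) = e j * of_int (C $$ (j,i))))"

text \<open>Cartan matrix of X_m (m \<ge> d): attach a simply-laced chain of nodes d+1..m to node d.\<close>
definition ext_cartan :: "int mat \<Rightarrow> nat \<Rightarrow> nat \<Rightarrow> int mat" where
  "ext_cartan C d m = mat m m (\<lambda>(i,j).
      if i < d \<and> j < d then C $$ (i,j)
      else if i = j then 2
      else if d - 1 \<le> i \<and> d - 1 \<le> j \<and> (j = i + 1 \<or> i = j + 1) then -1
      else 0)"

definition detX :: "int mat \<Rightarrow> nat \<Rightarrow> nat \<Rightarrow> int" where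
  "detX C d m = det (ext_cartan C d m)"

text \<open>Common difference of the arithmetic sequence det(X_m), m \<ge> d.\<close>
definition Delta :: "int mat \<Rightarrow> nat \<Rightarrow> int" where
  "Delta C d = detX C d (d+1) - detX C d d"

definition extensible :: "int mat \<Rightarrow> nat \<Rightarrow> bool" where
  "extensible C d \<longleftrightarrow> Delta C d \<noteq> 0 \<and> det C \<noteq> 0 \<and> gcd (Delta C d) (det C) = 1"

definition rat_inverse :: "int mat \<Rightarrow> rat mat" where
  "rat_inverse C = (case mat_inverse (map_mat of_int C) of Some B \<Rightarrow> B
                      | None \<Rightarrow> 0\<^sub>m (dim_row C) (dim_col C))"

definition a_coef :: "int mat \<Rightarrow> nat \<Rightarrow> nat \<Rightarrow> rat" where
  "a_coef C d i = (if i \<le> d then of_int (det C) * rat_inverse C $$ (d-1, i-1)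
                   else of_int (detX C d (i-1)))"

text \<open>c (indexed 1..n) are the coefficients of the fundamental weight omega_i of g(X_n)
  in the simple roots: omega_i = sum_k c_k alpha_k.  Evaluating on the simple coroot
  coroot_j gives sum_k c_k alpha_k(coroot_j) = sum_k C_n(j,k) c_k = delta_{ij}.\<close>
definition fund_weight_coeffs :: "int mat \<Rightarrow> nat \<Rightarrow> nat \<Rightarrow> nat \<Rightarrow> (nat \<Rightarrow> rat) \<Rightarrow> bool" where
  "fund_weight_coeffs C d n i c \<longleftrightarrow>
     (\<forall>j\<in>{1..n}. (\<Sum>k=1..n. of_int (ext_cartan C d n $$ (j-1, k-1)) * c k)
                  = (if j = i then 1 else 0))"

end

theory Submission imports Defs begin

text \<open>By the adjugate form of Cramer's rule, \<open>det(X\<^sub>n) c\<^sub>n\<close> is the \<open>(i,n)\<close> cofactor of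
  \<open>C(X\<^sub>n)\<close>. The minor obtained by deleting row \<open>i\<close> and column \<open>n\<close> has last row
  \<open>(0,\<dots>,0,-1)\<close> once \<open>n > max i d\<close>, so expanding along it shows that this cofactor does not
  depend on \<open>n \<ge> max i d\<close>. For \<open>n = d\<close> and \<open>i \<le> d\<close> it is the entry \<open>det(X) (C(X)\<^sup>-\<^sup>1)\<^sub>d\<^sub>i\<close>
  of the adjugate of \<open>C(X)\<close>; for \<open>n = i > d\<close> it is the principal minor \<open>det(X\<^sub>i\<^sub>-\<^sub>1)\<close>.\<close>

lemma ext_cartan_carrier [simp]: "ext_cartan C d n \<in> carrier_mat n n"
  unfolding ext_cartan_def by auto

lemma ext_cartan_dim [simp]:
  "dim_row (ext_cartan C d n) = n" "dim_col (ext_cartan C d n) = n"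
  unfolding ext_cartan_def by auto

lemma ext_cartan_index_mono:
  "a < m \<Longrightarrow> b < m \<Longrightarrow> m \<le> n \<Longrightarrow> ext_cartan C d n $$ (a,b) = ext_cartan C d m $$ (a,b)"
  unfolding ext_cartan_def by auto

lemma ext_cartan_self: "C \<in> carrier_mat d d \<Longrightarrow> ext_cartan C d d = C"
  by (rule eq_matI) (auto simp: ext_cartan_def)

lemma mat_delete_ext_cartan_last:
  "mat_delete (ext_cartan C d m) (m-1) (m-1) = ext_cartan C d (m-1)"
  by (rule eq_matI) (auto simp: mat_delete_def intro: ext_cartan_index_mono)

lemma det_mat_delete_ext_cartan_Suc:
  assumes "1 \<le> d" "d \<le> n" "l < n"
  shows "det (mat_delete (ext_cartan C d (Suc n)) l n) = - det (mat_delete (ext_cartan C d n) l (n-1))"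
proof -
  define M where "M = mat_delete (ext_cartan C d (Suc n)) l n"
  have M: "M \<in> carrier_mat n n"
    unfolding M_def using mat_delete_carrier[OF ext_cartan_carrier, of C d "Suc n"] by simp
  have last: "n - 1 < n" using assms by auto
  have last_row: "M $$ (n-1, j) = (if j = n-1 then -1 else 0)" if "j < n" for j
    using that assms unfolding M_def mat_delete_def ext_cartan_def by auto
  have "det M = (\<Sum>j<n. M $$ (n-1,j) * cofactor M (n-1) j)"
    by (rule laplace_expansion_row[OF M last])
  also have "\<dots> = (\<Sum>j<n. if j = n-1 then - cofactor M (n-1) j else 0)"
  proof (rule sum.cong)
    fix j assume "j \<in> {..<n}"
    then show "M $$ (n-1,j) * cofactor M (n-1) j = (if j = n-1 then - cofactor M (n-1) j else 0)"
      using last_row[of j] by simp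
  qed simp
  also have "\<dots> = - cofactor M (n-1) (n-1)"
    using last by (simp add: sum.delta)
  also have "\<dots> = - det (mat_delete M (n-1) (n-1))"
    unfolding cofactor_def by (simp add: mult_2[symmetric])
  also have "mat_delete M (n-1) (n-1) = mat_delete (ext_cartan C d n) l (n-1)"
    by (rule eq_matI) (auto simp: M_def mat_delete_def intro: ext_cartan_index_mono)
  finally show ?thesis unfolding M_def .
qed

lemma cofactor_ext_cartan_Suc:
  assumes "1 \<le> d" "d \<le> n" "l < n"
  shows "cofactor (ext_cartan C d (Suc n)) l n = cofactor (ext_cartan C d n) l (n-1)"
proof -
  have "(-1::int)^(l+n) = - ((-1)^(l+(n-1)))"
    using assms by (cases n) auto
  then show ?thesis
    unfolding cofactor_def det_mat_delete_ext_cartan_Suc[OF assms] by simp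
qed

lemma cofactor_ext_cartan_stable:
  assumes "1 \<le> d" "1 \<le> i" "max i d \<le> n"
  shows "cofactor (ext_cartan C d n) (i-1) (n-1)
       = cofactor (ext_cartan C d (max i d)) (i-1) (max i d - 1)"
  using assms(3)
proof (induction n rule: dec_induct)
  case (step m)
  then show ?case
    using cofactor_ext_cartan_Suc[of d m "i-1" C] assms by auto
qed simp

lemma (in comm_ring_hom) hom_cofactor:
  "cofactor (map_mat hom A) i j = hom (cofactor A i j)"
proof -
  have "mat_delete (map_mat hom A) i j = map_mat hom (mat_delete A i j)"
    by (rule eq_matI) (auto simp: mat_delete_def)
  then show ?thesis
    unfolding cofactor_def by (simp add: hom_distribs)
qed

lemma det_mult_solution_unit_vec:
  fixes A :: "'a :: comm_ring_1 mat"
  assumes A: "A \<in> carrier_mat n n" and x: "x \<in> carrier_vec n"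
    and Ax: "A *\<^sub>v x = unit_vec n l" and "l < n" "k < n"
  shows "det A * x $ k = cofactor A l k"
proof -
  have "det A * x $ k = ((det A \<cdot>\<^sub>m 1\<^sub>m n) *\<^sub>v x) $ k"
    using assms by auto
  also have "(det A \<cdot>\<^sub>m 1\<^sub>m n) *\<^sub>v x = adj_mat A *\<^sub>v unit_vec n l"
    using adj_mat[OF A] A x Ax by (metis assoc_mult_mat_vec)
  also have "\<dots> $ k = cofactor A l k"
    using adj_mat[OF A] A assms by (simp add: adj_mat_def)
  finally show ?thesis .
qed

lemma adj_mat_eq_smult_inverse:
  fixes A :: "'a :: comm_ring_1 mat"
  assumes A: "A \<in> carrier_mat n n" and B: "B \<in> carrier_mat n n" and AB: "A * B = 1\<^sub>m n"
  shows "adj_mat A = det A \<cdot>\<^sub>m B"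
proof -
  have "adj_mat A = adj_mat A * (A * B)"
    using AB adj_mat[OF A] by simp
  also have "\<dots> = (adj_mat A * A) * B"
    using adj_mat[OF A] A B by (metis assoc_mult_mat)
  also have "\<dots> = det A \<cdot>\<^sub>m B"
    using adj_mat[OF A] B by (simp add: mult_smult_assoc_mat[of _ n n])
  finally show ?thesis .
qed

lemma det_mult_rat_inverse:
  assumes C: "C \<in> carrier_mat d d" and "det C \<noteq> 0" and "k < d" "l < d"
  shows "of_int (det C) * rat_inverse C $$ (k,l) = of_int (cofactor C l k)"
proof -
  define Q where "Q = map_mat (of_int :: int \<Rightarrow> rat) C"
  have Q: "Q \<in> carrier_mat d d" using C unfolding Q_def by simp
  have "det Q \<noteq> 0" using assms unfolding Q_def by simp
  then have "Q \<in> Units (ring_mat TYPE(rat) d ())"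
    by (rule det_non_zero_imp_unit[OF Q])
  then obtain B where B: "mat_inverse Q = Some B"
    using mat_inverse(1)[OF Q, of "()"] by (cases "mat_inverse Q") auto
  have QB: "Q * B = 1\<^sub>m d" "B \<in> carrier_mat d d"
    using mat_inverse(2)[OF Q B] by auto
  have "rat_inverse C = B" unfolding rat_inverse_def Q_def[symmetric] B by simp
  then have "of_int (det C) * rat_inverse C $$ (k,l) = adj_mat Q $$ (k,l)"
    using adj_mat_eq_smult_inverse[OF Q QB(2,1)] QB assms by (simp add: Q_def)
  also have "\<dots> = of_int (cofactor C l k)"
    using Q assms by (simp add: adj_mat_def Q_def of_int_hom.hom_cofactor)
  finally show ?thesis .
qed

lemma fund_weight_coeffs_mult_mat_vec:
  assumes "fund_weight_coeffs C d n i c" "1 \<le> i"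
  shows "map_mat of_int (ext_cartan C d n) *\<^sub>v vec n (\<lambda>k. c (Suc k)) = unit_vec n (i-1)"
proof (rule eq_vecI)
  fix j assume "j < dim_vec (unit_vec n (i-1))"
  then have j: "j < n" by simp
  have "(map_mat of_int (ext_cartan C d n) *\<^sub>v vec n (\<lambda>k. c (Suc k))) $ j
      = (\<Sum>k<n. of_int (ext_cartan C d n $$ (j,k)) * c (Suc k))"
    using j by (auto simp: scalar_prod_def lessThan_atLeast0 intro!: sum.cong)
  also have "\<dots> = (\<Sum>k=1..n. of_int (ext_cartan C d n $$ (Suc j - 1, k - 1)) * c k)"
    by (simp add: sum.atLeast1_atMost_eq)
  also have "\<dots> = (if Suc j = i then 1 else 0)"
    using bspec[OF assms(1)[unfolded fund_weight_coeffs_def], of "Suc j"] j by simp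
  also have "\<dots> = unit_vec n (i-1) $ j"
    using j assms(2) by (auto simp: unit_vec_def)
  finally show "(map_mat of_int (ext_cartan C d n) *\<^sub>v vec n (\<lambda>k. c (Suc k))) $ j = unit_vec n (i-1) $ j" .
qed simp

lemma detX_mult_fund_weight_coeff_last:
  assumes "fund_weight_coeffs C d n i c" "1 \<le> i" "i \<le> n"
  shows "of_int (detX C d n) * c n = of_int (cofactor (ext_cartan C d n) (i-1) (n-1))"
proof -
  have "det (map_mat of_int (ext_cartan C d n)) * vec n (\<lambda>k. c (Suc k)) $ (n-1)
      = cofactor (map_mat of_int (ext_cartan C d n)) (i-1) (n-1)"
    by (rule det_mult_solution_unit_vec[OF _ _ fund_weight_coeffs_mult_mat_vec[OF assms(1,2)]])
      (use assms(2,3) in auto)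
  then show ?thesis
    using assms(2,3) unfolding detX_def by (simp add: of_int_hom.hom_cofactor)
qed

lemma a_coef_eq_cofactor:
  assumes C: "C \<in> carrier_mat d d" and "det C \<noteq> 0" "1 \<le> i"
  shows "a_coef C d i = of_int (cofactor (ext_cartan C d (max i d)) (i-1) (max i d - 1))"
proof (cases "i \<le> d")
  case True
  then show ?thesis
    using det_mult_rat_inverse[OF assms(1,2), of "d-1" "i-1"] assms
    by (simp add: a_coef_def ext_cartan_self)
next
  case False
  then have "cofactor (ext_cartan C d i) (i-1) (i-1) = detX C d (i-1)"
    unfolding cofactor_def detX_def mat_delete_ext_cartan_last by (simp add: mult_2[symmetric])
  then show ?thesis
    using False unfolding a_coef_def by simp
qed

theorem lemma3p7:
  fixes C :: "int mat" and d n i :: nat and c :: "nat \<Rightarrow> rat"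
  assumes "d \<ge> 1"
    and "gcm C d" and "symmetrizable C d"
    and "extensible C d"
    and "n \<ge> d" and "detX C d n \<noteq> 0"
    and "1 \<le> i" and "i \<le> n"
    and "fund_weight_coeffs C d n i c"
  shows "a_coef C d i = of_int (detX C d n) * c n"
proof -
  have "C \<in> carrier_mat d d" using assms(2) unfolding gcm_def by auto
  moreover have "det C \<noteq> 0" using assms(4) unfolding extensible_def by auto
  ultimately have "a_coef C d i
      = of_int (cofactor (ext_cartan C d (max i d)) (i-1) (max i d - 1))"
    using assms(7) by (rule a_coef_eq_cofactor)
  also have "\<dots> = of_int (cofactor (ext_cartan C d n) (i-1) (n-1))"
    using cofactor_ext_cartan_stable[of d i n C] assms by simp
  also have "\<dots> = of_int (detX C d n) * c n"
    using detX_mult_fund_weight_coeff_last[OF assms(9,7,8)] ..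
  finally show ?thesis .
qed

end
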